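(* For every tube $\mathcal T$, $\mathrm{fpdim}(\mathcal T)=1$.
   Context: $\Bbbk$ is algebraically closed. A tube (of rank $r\ge1$) is the $\Bbbk$-linear abelian category of finite-dimensional nilpotent representations of the quiver with $r$ vertices forming an oriented cycle (for $r=1$, one vertex with one loop). For a $\Bbbk$-linear abelian category $\mathcal C$: an object $M$ is a brick if $\mathrm{Hom}_{\mathcal C}(M,M)=\Bbbk$; a finite set $\phi=\{X_1,\dots,X_n\}$ of nonzero objects is a brick set if every $X_i$ is a brick and $\dim\mathrm{Hom}_{\mathcal C}(X_i,X_j)=\delta_{ij}$; its adjacency matrix is $C(\phi)=(\dim\mathrm{Ext}^1_{\mathcal C}(X_i,X_j))_{i,j}$; $\rho$ is the spectral radius; $\mathrm{fpdim}(\mathcal C)=\sup\{\rho(C(\phi)):\phi\text{ a brick set}\}$. *)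

theory Defs
  imports "HOL-Computational_Algebra.Polynomial" "HOL-Library.Function_Algebras"
    "Jordan_Normal_Form.Spectral_Radius" "HOL-Library.Extended_Real"
begin

text \<open>A representation of the cyclic quiver with r vertices 0,...,r-1 and arrows
  i -> (i+1) mod r (for r = 1: one loop). It is given by dimensions d i and
  matrices A i (entry A i a b, row a < d ((i+1) mod r), column b < d i),
  i.e. A i : k^(d i) -> k^(d ((i+1) mod r)). Linear maps are represented by
  finitely supported functions nat => nat => 'k.\<close>

type_synonym 'k qrep = "(nat \<Rightarrow> nat) \<times> (nat \<Rightarrow> nat \<Rightarrow> nat \<Rightarrow> 'k)"

definition nxt :: "nat \<Rightarrow> nat \<Rightarrow> nat" where
  "nxt r i = Suc i mod r"

definition mmul :: "nat \<Rightarrow> (nat \<Rightarrow> nat \<Rightarrow> 'k::field) \<Rightarrow> (nat \<Rightarrow> nat \<Rightarrow> 'k) \<Rightarrow> nat \<Rightarrow> nat \<Rightarrow> 'k" where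
  "mmul n X Y = (\<lambda>a c. \<Sum>b<n. X a b * Y b c)"

definition supp_in :: "nat \<Rightarrow> nat \<Rightarrow> (nat \<Rightarrow> nat \<Rightarrow> 'k::zero) \<Rightarrow> bool" where
  "supp_in m n X \<longleftrightarrow> (\<forall>a b. (a \<ge> m \<or> b \<ge> n) \<longrightarrow> X a b = 0)"

fun pth :: "nat \<Rightarrow> 'k::field qrep \<Rightarrow> nat \<Rightarrow> nat \<Rightarrow> nat \<Rightarrow> nat \<Rightarrow> 'k" where
  "pth r M i 0 = (\<lambda>a b. if a = b \<and> a < fst M i then 1 else 0)"
| "pth r M i (Suc n) = mmul (fst M ((i + n) mod r)) (snd M ((i + n) mod r)) (pth r M i n)"

definition is_rep :: "nat \<Rightarrow> 'k::field qrep \<Rightarrow> bool" where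
  "is_rep r M \<longleftrightarrow> (\<forall>i\<ge>r. fst M i = 0 \<and> snd M i = (\<lambda>_ _. 0)) \<and>
     (\<forall>i<r. supp_in (fst M (nxt r i)) (fst M i) (snd M i))"

text \<open>objects of the tube of rank r: finite-dimensional nilpotent representations\<close>
definition tube_obj :: "nat \<Rightarrow> 'k::field qrep \<Rightarrow> bool" where
  "tube_obj r M \<longleftrightarrow> is_rep r M \<and> (\<exists>N. \<forall>i<r. pth r M i N = (\<lambda>_ _. 0))"

definition nonzero_rep :: "nat \<Rightarrow> 'k::field qrep \<Rightarrow> bool" where
  "nonzero_rep r M \<longleftrightarrow> (\<exists>i<r. fst M i > 0)"

definition fsc :: "'k::field \<Rightarrow> (nat \<Rightarrow> nat \<Rightarrow> nat \<Rightarrow> 'k) \<Rightarrow> (nat \<Rightarrow> nat \<Rightarrow> nat \<Rightarrow> 'k)" where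
  "fsc c g = (\<lambda>i a b. c * g i a b)"

definition dimk :: "(nat \<Rightarrow> nat \<Rightarrow> nat \<Rightarrow> 'k::field) set \<Rightarrow> nat" where
  "dimk S = Vector_Spaces.vector_space.dim fsc S"

text \<open>families of k-linear maps M_i -> N_i (vertexwise), the domain of the standard
  map whose kernel is Hom and whose cokernel is Ext^1\<close>
definition vmaps :: "nat \<Rightarrow> 'k::field qrep \<Rightarrow> 'k qrep \<Rightarrow> (nat \<Rightarrow> nat \<Rightarrow> nat \<Rightarrow> 'k) set" where
  "vmaps r M N = {g. (\<forall>i\<ge>r. g i = (\<lambda>_ _. 0)) \<and> (\<forall>i<r. supp_in (fst N i) (fst M i) (g i))}"

definition amaps :: "nat \<Rightarrow> 'k::field qrep \<Rightarrow> 'k qrep \<Rightarrow> (nat \<Rightarrow> nat \<Rightarrow> nat \<Rightarrow> 'k) set" where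
  "amaps r M N = {h. (\<forall>i\<ge>r. h i = (\<lambda>_ _. 0)) \<and> (\<forall>i<r. supp_in (fst N (nxt r i)) (fst M i) (h i))}"

definition delta :: "nat \<Rightarrow> 'k::field qrep \<Rightarrow> 'k qrep \<Rightarrow> (nat \<Rightarrow> nat \<Rightarrow> nat \<Rightarrow> 'k) \<Rightarrow> (nat \<Rightarrow> nat \<Rightarrow> nat \<Rightarrow> 'k)" where
  "delta r M N g = (\<lambda>i. if i < r then
      (\<lambda>a b. mmul (fst M (nxt r i)) (g (nxt r i)) (snd M i) a b - mmul (fst N i) (snd N i) (g i) a b)
    else (\<lambda>_ _. 0))"

definition homs :: "nat \<Rightarrow> 'k::field qrep \<Rightarrow> 'k qrep \<Rightarrow> (nat \<Rightarrow> nat \<Rightarrow> nat \<Rightarrow> 'k) set" where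
  "homs r M N = {g \<in> vmaps r M N. delta r M N g = (\<lambda>_ _ _. 0)}"

definition dim_hom :: "nat \<Rightarrow> 'k::field qrep \<Rightarrow> 'k qrep \<Rightarrow> nat" where
  "dim_hom r M N = dimk (homs r M N)"

text \<open>Ext^1(M,N) = cokernel of delta : vmaps -> amaps (standard projective resolution)\<close>
definition dim_ext :: "nat \<Rightarrow> 'k::field qrep \<Rightarrow> 'k qrep \<Rightarrow> nat" where
  "dim_ext r M N = dimk (amaps r M N) - dimk (delta r M N ` vmaps r M N)"

definition is_brick :: "nat \<Rightarrow> 'k::field qrep \<Rightarrow> bool" where
  "is_brick r M \<longleftrightarrow> dim_hom r M M = 1"

text \<open>a brick set {X_1,...,X_n}, listed as a nonempty list\<close>
definition brick_set :: "nat \<Rightarrow> 'k::field qrep list \<Rightarrow> bool" where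
  "brick_set r Xs \<longleftrightarrow> Xs \<noteq> [] \<and>
     (\<forall>X\<in>set Xs. tube_obj r X \<and> nonzero_rep r X \<and> is_brick r X) \<and>
     (\<forall>i<length Xs. \<forall>j<length Xs. dim_hom r (Xs!i) (Xs!j) = (if i = j then 1 else 0))"

definition adj_mat :: "nat \<Rightarrow> 'k::field qrep list \<Rightarrow> complex mat" where
  "adj_mat r Xs = mat (length Xs) (length Xs) (\<lambda>(i,j). of_nat (dim_ext r (Xs!i) (Xs!j)))"

definition fpdim_tube :: "'k::field itself \<Rightarrow> nat \<Rightarrow> ereal" where
  "fpdim_tube _ r = (SUP Xs \<in> {Xs :: 'k qrep list. brick_set r Xs}. ereal (spectral_radius (adj_mat r Xs)))"

end

theory Submission
  imports Defs
begin

(* For a representation of the cyclic quiver, dim Hom(M, N) - dim Ext(M, N) is the Euler form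
   <x, y> = \<Sum>k. x k * y k - x k * y (k + 1) of the dimension vectors, because Hom and Ext are the
   kernel and cokernel of a linear map between spaces of dimensions \<Sum>k. x k * y k and
   \<Sum>k. x k * y (k + 1). For a brick set X_1, ..., X_n this makes the adjacency matrix
   I - (<dim X_i, dim X_j>), and the quadratic form <w, w> is positive semidefinite since
   2 w_k w_(k+1) <= w_k^2 + w_(k+1)^2. So u^T C u <= u^T u for every u >= 0, and applying this
   to the absolute values of an eigenvector bounds the spectral radius by 1. The bound is
   attained by the uniserial representation of length r with one-dimensional spaces, a brick
   with a one-dimensional self-extension. *)

section \<open>Rank-nullity for finite-dimensional subspaces\<close>

context vector_space
begin

lemma span_disjoint_subsets_eq_0:
  assumes "independent B" "C \<subseteq> B" "D \<subseteq> B" "C \<inter> D = {}"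
    and "x \<in> span C" "x \<in> span D"
  shows "x = 0"
proof -
  obtain s u where s: "finite s" "s \<subseteq> C" and x_s: "x = (\<Sum>v\<in>s. u v *s v)"
    using \<open>x \<in> span C\<close> by (auto simp: span_explicit)
  obtain t w where t: "finite t" "t \<subseteq> D" and x_t: "x = (\<Sum>v\<in>t. w v *s v)"
    using \<open>x \<in> span D\<close> by (auto simp: span_explicit)
  define h where "h v = (if v \<in> s then u v else - w v)" for v
  have st: "s \<inter> t = {}" using s t assms(4) by blast
  have "(\<Sum>v\<in>s \<union> t. h v *s v) = (\<Sum>v\<in>s. h v *s v) + (\<Sum>v\<in>t. h v *s v)"
    using s t st by (simp add: sum.union_disjoint)
  also have "(\<Sum>v\<in>s. h v *s v) = x"
    unfolding x_s by (simp add: h_def)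
  also have "(\<Sum>v\<in>t. h v *s v) = - x"
    unfolding x_t sum_negf[symmetric] using st by (intro sum.cong) (auto simp: h_def)
  finally have "(\<Sum>v\<in>s \<union> t. h v *s v) = 0" by simp
  moreover have "s \<union> t \<subseteq> B" using s t assms(2,3) by blast
  ultimately have "\<forall>v\<in>s \<union> t. h v = 0"
    using assms(1) s(1) t(1) unfolding independent_explicit_finite_subsets by blast
  then have "\<forall>v\<in>s. u v = 0" by (metis UnI1 h_def)
  then show ?thesis unfolding x_s by simp
qed

end

context vector_space_pair
begin

lemma dim_kernel_add_dim_image:
  assumes lin: "Vector_Spaces.linear s1 s2 f" and V: "vs1.subspace V"
    and W: "finite W" "V \<subseteq> vs1.span W"
  shows "vs1.dim {x\<in>V. f x = 0} + vs2.dim (f ` V) = vs1.dim V"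
proof -
  interpret lf: Vector_Spaces.linear s1 s2 f by (rule lin)
  define K where "K = {x\<in>V. f x = 0}"
  obtain BK where BK: "BK \<subseteq> K" "vs1.independent BK" "K \<subseteq> vs1.span BK" "card BK = vs1.dim K"
    using vs1.basis_exists[of K] by blast
  obtain B where B: "BK \<subseteq> B" "B \<subseteq> V" "vs1.independent B" "V \<subseteq> vs1.span B"
    using vs1.maximal_independent_subset_extend[of BK V] BK(1,2) by (auto simp: K_def)
  have "finite B" using vs1.independent_span_bound[OF W(1) B(3)] B(2) W(2) by auto
  define C where "C = B - BK"
  have "vs1.span C \<subseteq> V" using B(2) V vs1.span_minimal[of C V] by (auto simp: C_def)
  have inj: "inj_on f (vs1.span C)"
  proof (subst lf.inj_on_iff_eq_0[OF vs1.subspace_span], intro ballI impI)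
    fix x assume x: "x \<in> vs1.span C" "f x = 0"
    then have "x \<in> vs1.span BK" using \<open>vs1.span C \<subseteq> V\<close> BK(3) by (auto simp: K_def)
    then show "x = 0"
      using vs1.span_disjoint_subsets_eq_0[OF B(3), of C BK x] x(1) B(1) by (auto simp: C_def)
  qed
  have "f ` B \<subseteq> insert 0 (f ` C)" using B(1) BK(1) by (auto simp: C_def K_def)
  then have "vs2.span (f ` B) = vs2.span (f ` C)"
    using vs2.span_mono[of "f ` B" "insert 0 (f ` C)"] vs2.span_mono[of "f ` C" "f ` B"]
    by (auto simp: C_def)
  moreover have "vs2.span (f ` V) = vs2.span (f ` B)"
    unfolding lf.span_image vs1.span_subspace[OF B(2,4) V]
      vs1.span_subspace[OF subset_refl vs1.span_superset V] ..
  ultimately have "vs2.dim (f ` V) = vs2.dim (f ` C)" using vs2.span_eq_dim by metis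
  also have "\<dots> = card C"
    using vs2.dim_eq_card_independent[OF lf.independent_injective_image[OF _ inj]]
      card_image[OF inj_on_subset[OF inj vs1.span_superset]] vs1.independent_mono[OF B(3)]
    by (auto simp: C_def)
  also have "\<dots> = card B - card BK"
    using \<open>finite B\<close> B(1) by (simp add: C_def card_Diff_subset finite_subset)
  finally show ?thesis
    using BK(4) vs1.basis_card_eq_dim[OF B(2,4,3)] card_mono[OF \<open>finite B\<close> B(1)]
    by (simp add: K_def)
qed

end

section \<open>Families of matrices as a vector space\<close>

lemma vector_space_fsc: "vector_space (fsc :: 'k::field \<Rightarrow> (nat \<Rightarrow> nat \<Rightarrow> nat \<Rightarrow> 'k) \<Rightarrow> _)"
  by unfold_locales (auto simp: fsc_def fun_eq_iff algebra_simps)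

interpretation fam: vector_space "fsc :: 'k::field \<Rightarrow> (nat \<Rightarrow> nat \<Rightarrow> nat \<Rightarrow> 'k) \<Rightarrow> _"
  by (rule vector_space_fsc)

interpretation fam_pair: vector_space_pair
  "fsc :: 'k::field \<Rightarrow> (nat \<Rightarrow> nat \<Rightarrow> nat \<Rightarrow> 'k) \<Rightarrow> _" "fsc :: 'k \<Rightarrow> (nat \<Rightarrow> nat \<Rightarrow> nat \<Rightarrow> 'k) \<Rightarrow> _"
  by unfold_locales

definition unit_entry :: "nat \<times> nat \<times> nat \<Rightarrow> nat \<Rightarrow> nat \<Rightarrow> nat \<Rightarrow> 'k::field" where
  "unit_entry p = (\<lambda>i a b. if (i, a, b) = p then 1 else 0)"

definition supported_on :: "(nat \<times> nat \<times> nat) set \<Rightarrow> (nat \<Rightarrow> nat \<Rightarrow> nat \<Rightarrow> 'k::field) set" where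
  "supported_on P = {g. \<forall>i a b. (i, a, b) \<notin> P \<longrightarrow> g i a b = 0}"

lemma sum_apply3:
  "(sum h T :: nat \<Rightarrow> nat \<Rightarrow> nat \<Rightarrow> 'a::comm_monoid_add) i a b = (\<Sum>v\<in>T. h v i a b)"
  by (induction T rule: infinite_finite_induct) auto

lemma inj_unit_entry: "inj (unit_entry :: _ \<Rightarrow> _ \<Rightarrow> _ \<Rightarrow> _ \<Rightarrow> 'k::field)"
proof (rule injI)
  fix p q :: "nat \<times> nat \<times> nat"
  assume "(unit_entry p :: _ \<Rightarrow> _ \<Rightarrow> _ \<Rightarrow> 'k) = unit_entry q"
  then have "(unit_entry p :: _ \<Rightarrow> _ \<Rightarrow> _ \<Rightarrow> 'k) (fst p) (fst (snd p)) (snd (snd p))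
      = unit_entry q (fst p) (fst (snd p)) (snd (snd p))" by simp
  then show "p = q" by (auto simp: unit_entry_def split: if_splits)
qed

lemma independent_unit_entries:
  assumes "finite P"
  shows "fam.independent ((unit_entry :: _ \<Rightarrow> _ \<Rightarrow> _ \<Rightarrow> _ \<Rightarrow> 'k::field) ` P)"
proof
  assume "fam.dependent ((unit_entry :: _ \<Rightarrow> _ \<Rightarrow> _ \<Rightarrow> _ \<Rightarrow> 'k) ` P)"
  then obtain u where u: "\<exists>v\<in>unit_entry ` P. u v \<noteq> 0"
    and sum0: "(\<Sum>v\<in>(unit_entry :: _ \<Rightarrow> _ \<Rightarrow> _ \<Rightarrow> _ \<Rightarrow> 'k) ` P. fsc (u v) v) = 0"
    using fam.dependent_finite[of "unit_entry ` P"] assms by auto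
  from u obtain i a b where p: "(i, a, b) \<in> P" "u (unit_entry (i, a, b)) \<noteq> 0" by auto
  have "0 = (\<Sum>v\<in>(unit_entry :: _ \<Rightarrow> _ \<Rightarrow> _ \<Rightarrow> _ \<Rightarrow> 'k) ` P. fsc (u v) v) i a b"
    using sum0 by simp
  also have "\<dots> = (\<Sum>q\<in>P. u (unit_entry q) * (unit_entry q :: _ \<Rightarrow> _ \<Rightarrow> _ \<Rightarrow> 'k) i a b)"
    unfolding sum_apply3 fsc_def
    by (subst sum.reindex) (auto intro: inj_on_subset[OF inj_unit_entry])
  also have "\<dots> = (\<Sum>q\<in>P. if q = (i, a, b) then u (unit_entry (i, a, b)) else 0)"
    by (rule sum.cong) (auto simp: unit_entry_def)
  also have "\<dots> = u (unit_entry (i, a, b))" using assms p(1) by simp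
  finally show False using p(2) by simp
qed

lemma supported_on_subset_span:
  assumes "finite P"
  shows "supported_on P \<subseteq> fam.span ((unit_entry :: _ \<Rightarrow> _ \<Rightarrow> _ \<Rightarrow> _ \<Rightarrow> 'k::field) ` P)"
proof
  fix g :: "nat \<Rightarrow> nat \<Rightarrow> nat \<Rightarrow> 'k" assume g: "g \<in> supported_on P"
  have "g = (\<Sum>p\<in>P. fsc (g (fst p) (fst (snd p)) (snd (snd p))) (unit_entry p))"
  proof (intro ext)
    fix i a b
    have "(\<Sum>p\<in>P. fsc (g (fst p) (fst (snd p)) (snd (snd p))) (unit_entry p)) i a b
        = (\<Sum>p\<in>P. if p = (i, a, b) then g i a b else 0)"
      unfolding sum_apply3 by (rule sum.cong) (auto simp: fsc_def unit_entry_def)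
    also have "\<dots> = g i a b" using assms g by (auto simp: supported_on_def)
    finally show "g i a b = (\<Sum>p\<in>P. fsc (g (fst p) (fst (snd p)) (snd (snd p))) (unit_entry p)) i a b"
      by simp
  qed
  also have "\<dots> \<in> fam.span (unit_entry ` P)"
    by (intro fam.span_sum fam.span_scale fam.span_base) auto
  finally show "g \<in> fam.span (unit_entry ` P)" .
qed

lemma dim_supported_on:
  assumes "finite P"
  shows "fam.dim (supported_on P :: (nat \<Rightarrow> nat \<Rightarrow> nat \<Rightarrow> 'k::field) set) = card P"
proof -
  have sub: "unit_entry ` P \<subseteq> (supported_on P :: (nat \<Rightarrow> nat \<Rightarrow> nat \<Rightarrow> 'k) set)"
    by (auto simp: unit_entry_def supported_on_def)
  then have "fam.dim (supported_on P :: (nat \<Rightarrow> nat \<Rightarrow> nat \<Rightarrow> 'k) set)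
      = card (unit_entry ` P :: (nat \<Rightarrow> nat \<Rightarrow> nat \<Rightarrow> 'k) set)"
    using fam.basis_card_eq_dim[OF sub supported_on_subset_span[OF assms] independent_unit_entries[OF assms]]
    by simp
  then show ?thesis by (simp add: card_image inj_on_subset[OF inj_unit_entry])
qed

lemma subspace_supported_on: "fam.subspace (supported_on P :: (nat \<Rightarrow> nat \<Rightarrow> nat \<Rightarrow> 'k::field) set)"
  by (auto simp: fam.subspace_def supported_on_def fsc_def)

section \<open>The Euler form of the cyclic quiver\<close>

definition entries :: "nat \<Rightarrow> (nat \<Rightarrow> nat) \<Rightarrow> (nat \<Rightarrow> nat) \<Rightarrow> (nat \<times> nat \<times> nat) set" where
  "entries r m n = (SIGMA i:{..<r}. {..<n i} \<times> {..<m i})"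

lemma finite_entries [simp]: "finite (entries r m n)"
  by (simp add: entries_def)

lemma card_entries: "card (entries r m n) = (\<Sum>i<r. m i * n i)"
  by (simp add: entries_def card_cartesian_product mult.commute)

lemma vmaps_eq_supported_on: "vmaps r M N = supported_on (entries r (fst M) (fst N))"
  unfolding vmaps_def supported_on_def entries_def supp_in_def
  by (auto simp: fun_eq_iff not_less) (meson not_less)+

lemma amaps_eq_supported_on:
  "amaps r M N = supported_on (entries r (fst M) (\<lambda>i. fst N (nxt r i)))"
  unfolding amaps_def supported_on_def entries_def supp_in_def
  by (auto simp: fun_eq_iff not_less) (meson not_less)+

lemma linear_delta: "Vector_Spaces.linear fsc fsc (delta r M N :: _ \<Rightarrow> _ \<Rightarrow> _ \<Rightarrow> _ \<Rightarrow> 'k::field)"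
proof -
  have "delta r M N (g + h) = delta r M N g + delta r M N h" for g h :: "nat \<Rightarrow> nat \<Rightarrow> nat \<Rightarrow> 'k"
    by (auto simp: delta_def mmul_def fun_eq_iff algebra_simps sum.distrib)
  moreover have "delta r M N (fsc c g) = fsc c (delta r M N g)" for c and g :: "nat \<Rightarrow> nat \<Rightarrow> nat \<Rightarrow> 'k"
    by (auto simp: delta_def mmul_def fun_eq_iff fsc_def algebra_simps sum_distrib_left)
  ultimately show ?thesis
    unfolding Vector_Spaces.linear_iff using vector_space_fsc by blast
qed

lemma nxt_less: "r \<ge> 1 \<Longrightarrow> nxt r i < r"
  by (simp add: nxt_def)

lemma delta_in_amaps:
  assumes "r \<ge> 1" "is_rep r M" "is_rep r N" "g \<in> vmaps r M N"
  shows "delta r M N g \<in> amaps r M N"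
  unfolding amaps_def
proof (intro CollectI conjI allI impI)
  fix i :: nat assume "r \<le> i"
  then show "delta r M N g i = (\<lambda>_ _. 0)" by (simp add: delta_def)
next
  fix i assume i: "i < r"
  have "supp_in (fst N (nxt r i)) (fst M (nxt r i)) (g (nxt r i))" "supp_in (fst N i) (fst M i) (g i)"
    using assms(4) nxt_less[OF assms(1)] i by (auto simp: vmaps_def)
  moreover have "supp_in (fst M (nxt r i)) (fst M i) (snd M i)" "supp_in (fst N (nxt r i)) (fst N i) (snd N i)"
    using assms(2,3) i by (auto simp: is_rep_def)
  ultimately show "supp_in (fst N (nxt r i)) (fst M i) (delta r M N g i)"
    using i unfolding supp_in_def delta_def mmul_def by auto
qed

definition euler_form :: "nat \<Rightarrow> (nat \<Rightarrow> 'a::comm_ring) \<Rightarrow> (nat \<Rightarrow> 'a) \<Rightarrow> 'a" where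
  "euler_form r x y = (\<Sum>k<r. x k * y k - x k * y (nxt r k))"

lemma of_nat_dim_hom_minus_dim_ext:
  assumes r: "r \<ge> 1" and M: "is_rep r M" and N: "is_rep r N"
  shows "of_nat (dim_hom r M N) - of_nat (dim_ext r M N)
    = (euler_form r (\<lambda>i. of_nat (fst M i)) (\<lambda>i. of_nat (fst N i)) :: 'a::comm_ring_1)"
proof -
  let ?V = "vmaps r M N"
  let ?PV = "entries r (fst M) (fst N)" and ?PA = "entries r (fst M) (\<lambda>i. fst N (nxt r i))"
  have "homs r M N = {g \<in> ?V. delta r M N g = 0}"
    by (simp add: homs_def zero_fun_def)
  then have rank_nullity: "dim_hom r M N + fam.dim (delta r M N ` ?V) = card ?PV"
    unfolding dim_hom_def dimk_def vmaps_eq_supported_on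
    using fam_pair.dim_kernel_add_dim_image[OF linear_delta[of r M N] subspace_supported_on
        finite_imageI[OF finite_entries] supported_on_subset_span[OF finite_entries]]
    by (simp add: dim_supported_on)
  have "delta r M N ` ?V \<subseteq> supported_on ?PA"
    using delta_in_amaps[OF r M N] by (auto simp: amaps_eq_supported_on)
  also have "\<dots> \<subseteq> fam.span (unit_entry ` ?PA)"
    by (rule supported_on_subset_span[OF finite_entries])
  finally have "fam.dim (delta r M N ` ?V) \<le> card ?PA"
    using fam.dim_le_card card_image_le[OF finite_entries] by (meson finite_entries finite_imageI le_trans)
  moreover have "dim_ext r M N = card ?PA - fam.dim (delta r M N ` ?V)"
    by (simp add: dim_ext_def dimk_def amaps_eq_supported_on dim_supported_on)
  ultimately have "of_nat (dim_hom r M N) - of_nat (dim_ext r M N)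
      = (of_nat (card ?PV) - of_nat (card ?PA) :: 'a)"
    using rank_nullity by (simp add: of_nat_diff flip: of_nat_add)
  also have "\<dots> = euler_form r (\<lambda>i. of_nat (fst M i)) (\<lambda>i. of_nat (fst N i))"
    by (simp add: card_entries euler_form_def sum_subtractf)
  finally show ?thesis .
qed

lemma bij_betw_nxt:
  assumes "r \<ge> 1"
  shows "bij_betw (nxt r) {..<r} {..<r}"
proof -
  have "inj_on (nxt r) {..<r}"
    by (rule inj_onI) (auto simp: nxt_def mod_Suc split: if_splits)
  moreover have "nxt r ` {..<r} \<subseteq> {..<r}" using nxt_less[OF assms] by auto
  ultimately show ?thesis
    by (simp add: bij_betw_def endo_inj_surj)
qed

lemma euler_form_self_nonneg:
  fixes w :: "nat \<Rightarrow> 'a::linordered_idom"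
  assumes "r \<ge> 1"
  shows "0 \<le> euler_form r w w"
proof -
  have "2 * (\<Sum>k<r. w k * w (nxt r k)) \<le> (\<Sum>k<r. w k * w k + w (nxt r k) * w (nxt r k))"
    unfolding sum_distrib_left
  proof (rule sum_mono)
    fix k
    have "0 \<le> (w k - w (nxt r k)) * (w k - w (nxt r k))" by simp
    then show "2 * (w k * w (nxt r k)) \<le> w k * w k + w (nxt r k) * w (nxt r k)"
      by (simp add: algebra_simps)
  qed
  also have "\<dots> = 2 * (\<Sum>k<r. w k * w k)"
    using sum.reindex_bij_betw[OF bij_betw_nxt[OF assms], of "\<lambda>k. w k * w k"]
    by (simp add: sum.distrib)
  finally show ?thesis by (simp add: euler_form_def sum_subtractf)
qed

lemma euler_form_eq_sum_mult_diff: "euler_form r x y = (\<Sum>k<r. x k * (y k - y (nxt r k)))"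
  by (simp add: euler_form_def right_diff_distrib)

lemma euler_form_sum_sum:
  fixes x y :: "'b \<Rightarrow> nat \<Rightarrow> 'a::comm_ring"
  shows "euler_form r (\<lambda>k. \<Sum>i\<in>I. u i * x i k) (\<lambda>k. \<Sum>j\<in>J. v j * y j k)
    = (\<Sum>i\<in>I. \<Sum>j\<in>J. u i * v j * euler_form r (x i) (y j))"
proof -
  have "(\<Sum>i\<in>I. u i * x i k) * ((\<Sum>j\<in>J. v j * y j k) - (\<Sum>j\<in>J. v j * y j (nxt r k)))
      = (\<Sum>i\<in>I. \<Sum>j\<in>J. u i * v j * (x i k * (y j k - y j (nxt r k))))" for k
    by (simp add: sum_product flip: sum_subtractf right_diff_distrib) (simp add: mult_ac)
  then have "euler_form r (\<lambda>k. \<Sum>i\<in>I. u i * x i k) (\<lambda>k. \<Sum>j\<in>J. v j * y j k)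
      = (\<Sum>k<r. \<Sum>i\<in>I. \<Sum>j\<in>J. u i * v j * (x i k * (y j k - y j (nxt r k))))"
    by (simp add: euler_form_eq_sum_mult_diff)
  also have "\<dots> = (\<Sum>i\<in>I. \<Sum>j\<in>J. \<Sum>k<r. u i * v j * (x i k * (y j k - y j (nxt r k))))"
    by (subst sum.swap) (simp add: sum.swap[of _ "{..<r}"])
  finally show ?thesis
    by (simp add: euler_form_eq_sum_mult_diff sum_distrib_left)
qed

section \<open>Spectral radius of brick sets\<close>

lemma spectral_radius_le_quadratic_bound:
  fixes A :: "complex mat"
  assumes A: "A \<in> carrier_mat n n" and "0 < n"
    and bound: "\<And>u. (\<And>i. 0 \<le> u i) \<Longrightarrow>
      (\<Sum>i<n. \<Sum>j<n. u i * u j * cmod (A $$ (i, j))) \<le> c * (\<Sum>i<n. u i * u i)"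
  shows "spectral_radius A \<le> c"
proof -
  obtain \<mu> where "\<mu> \<in> spectrum A" and radius: "spectral_radius A = cmod \<mu>"
    using spectral_radius_mem_max(1)[OF A \<open>0 < n\<close>] by auto
  then obtain v where v: "v \<in> carrier_vec n" "v \<noteq> 0\<^sub>v n" "A *\<^sub>v v = \<mu> \<cdot>\<^sub>v v"
    using A unfolding spectrum_def eigenvalue_def eigenvector_def by auto
  define u where "u i = cmod (v $ i)" for i
  have u_nonneg: "0 \<le> u i" for i by (simp add: u_def)
  have row: "cmod \<mu> * u i \<le> (\<Sum>j<n. cmod (A $$ (i, j)) * u j)" if "i < n" for i
  proof -
    have "\<mu> * v $ i = (\<Sum>j<n. A $$ (i, j) * v $ j)"
      using v A that
      by (auto simp: scalar_prod_def lessThan_atLeast0 dest!: arg_cong[where f = "\<lambda>w. w $ i"])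
    then have "cmod \<mu> * u i = cmod (\<Sum>j<n. A $$ (i, j) * v $ j)"
      by (metis norm_mult u_def)
    also have "\<dots> \<le> (\<Sum>j<n. cmod (A $$ (i, j)) * u j)"
      using norm_sum[of "\<lambda>j. A $$ (i, j) * v $ j"] by (simp add: u_def norm_mult)
    finally show ?thesis .
  qed
  define S where "S = (\<Sum>i<n. u i * u i)"
  have "0 < S"
  proof -
    obtain i where "i < n" "v $ i \<noteq> 0"
      using v(1,2) by (metis carrier_vecD eq_vecI index_zero_vec)
    then have "0 < u i * u i" by (simp add: u_def)
    also have "\<dots> \<le> S"
      unfolding S_def using \<open>i < n\<close> u_nonneg by (intro member_le_sum) auto
    finally show ?thesis .
  qed
  have "cmod \<mu> * S = (\<Sum>i<n. u i * (cmod \<mu> * u i))"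
    by (simp add: S_def sum_distrib_left algebra_simps)
  also have "\<dots> \<le> (\<Sum>i<n. u i * (\<Sum>j<n. cmod (A $$ (i, j)) * u j))"
    using row u_nonneg by (intro sum_mono mult_left_mono) auto
  also have "\<dots> = (\<Sum>i<n. \<Sum>j<n. u i * u j * cmod (A $$ (i, j)))"
    by (simp add: sum_distrib_left algebra_simps)
  also have "\<dots> \<le> c * S"
    unfolding S_def by (rule bound[OF u_nonneg])
  finally show ?thesis
    using \<open>0 < S\<close> radius by simp
qed

lemma brick_set_dim_ext:
  assumes r: "r \<ge> 1" and B: "brick_set r Xs" and i: "i < length Xs" and j: "j < length Xs"
  shows "real (dim_ext r (Xs!i) (Xs!j))
    = of_bool (i = j) - euler_form r (\<lambda>k. real (fst (Xs!i) k)) (\<lambda>k. real (fst (Xs!j) k))"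
proof -
  have "is_rep r (Xs!i)" "is_rep r (Xs!j)"
    using B i j nth_mem by (auto simp: brick_set_def tube_obj_def)
  moreover have "dim_hom r (Xs!i) (Xs!j) = of_bool (i = j)"
    using B i j by (simp add: brick_set_def)
  ultimately show ?thesis
    using of_nat_dim_hom_minus_dim_ext[OF r, of "Xs!i" "Xs!j", where 'a = real] by simp
qed

lemma brick_set_ext_quadratic_le:
  assumes r: "r \<ge> 1" and B: "brick_set r Xs"
  shows "(\<Sum>i<length Xs. \<Sum>j<length Xs. u i * u j * real (dim_ext r (Xs!i) (Xs!j)))
    \<le> (\<Sum>i<length Xs. u i * u i)"
proof -
  let ?n = "length Xs"
  define d where "d i = (\<lambda>k. real (fst (Xs!i) k))" for i
  have "(\<Sum>i<?n. \<Sum>j<?n. u i * u j * real (dim_ext r (Xs!i) (Xs!j)))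
      = (\<Sum>i<?n. \<Sum>j<?n. u i * u j * of_bool (i = j))
        - (\<Sum>i<?n. \<Sum>j<?n. u i * u j * euler_form r (d i) (d j))"
    using brick_set_dim_ext[OF r B] by (simp add: d_def right_diff_distrib sum_subtractf)
  also have "(\<Sum>i<?n. \<Sum>j<?n. u i * u j * of_bool (i = j)) = (\<Sum>i<?n. u i * u i)"
    by (simp add: of_bool_def if_distrib cong: if_cong)
  also have "(\<Sum>i<?n. \<Sum>j<?n. u i * u j * euler_form r (d i) (d j))
      = euler_form r (\<lambda>k. \<Sum>i<?n. u i * d i k) (\<lambda>k. \<Sum>j<?n. u j * d j k)"
    by (rule euler_form_sum_sum[symmetric])
  finally show ?thesis
    using euler_form_self_nonneg[OF r] by simp
qed

lemma spectral_radius_adj_mat_le_1: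
  assumes "r \<ge> 1" and "brick_set r Xs"
  shows "spectral_radius (adj_mat r Xs) \<le> 1"
proof (rule spectral_radius_le_quadratic_bound)
  show "adj_mat r Xs \<in> carrier_mat (length Xs) (length Xs)"
    by (simp add: adj_mat_def)
  show "0 < length Xs"
    using assms(2) by (simp add: brick_set_def)
  show "(\<Sum>i<length Xs. \<Sum>j<length Xs. u i * u j * cmod (adj_mat r Xs $$ (i, j)))
      \<le> 1 * (\<Sum>i<length Xs. u i * u i)" for u
    using brick_set_ext_quadratic_le[OF assms, of u] by (simp add: adj_mat_def)
qed

lemma spectrum_upper_triangular:
  fixes A :: "'a::field mat"
  assumes "A \<in> carrier_mat n n" and "upper_triangular A"
  shows "spectrum A = set (diag_mat A)"
  using spectrum_root_char_poly[OF assms(1)] char_poly_upper_triangular[OF assms]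
  by (auto simp: poly_prod_list prod_list_zero_iff)

lemma spectral_radius_adj_mat_singleton: "spectral_radius (adj_mat r [X]) = real (dim_ext r X X)"
proof -
  have "adj_mat r [X] \<in> carrier_mat 1 1" "upper_triangular (adj_mat r [X])"
    by (auto simp: adj_mat_def upper_triangular_def)
  then have "spectrum (adj_mat r [X]) = {of_nat (dim_ext r X X)}"
    by (subst spectrum_upper_triangular) (auto simp: diag_mat_def adj_mat_def)
  then show ?thesis
    by (simp add: spectral_radius_def)
qed

section \<open>A brick with a one-dimensional self-extension\<close>

(* k -> k -> ... -> k with identity arrows i -> i + 1 and the zero arrow r - 1 -> 0 *)
definition uniserial_rep :: "nat \<Rightarrow> 'k::field qrep" where
  "uniserial_rep r = ((\<lambda>i. if i < r then 1 else 0), (\<lambda>i a b. if Suc i < r \<and> a = 0 \<and> b = 0 then 1 else 0))"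

lemma is_rep_uniserial_rep: "r \<ge> 1 \<Longrightarrow> is_rep r (uniserial_rep r :: 'k::field qrep)"
  by (auto simp: is_rep_def uniserial_rep_def supp_in_def nxt_less fun_eq_iff)

lemma mmul_Suc_0: "mmul (Suc 0) P Q = (\<lambda>a b. P a 0 * Q 0 b)"
  by (simp add: mmul_def fun_eq_iff)

lemma pth_uniserial_rep:
  assumes "i < r"
  shows "pth r (uniserial_rep r :: 'k::field qrep) i n = (\<lambda>a b. if a = 0 \<and> b = 0 \<and> i + n < r then 1 else 0)"
proof (induction n)
  case 0
  then show ?case using assms by (auto simp: uniserial_rep_def fun_eq_iff)
next
  case (Suc n)
  have "fst (uniserial_rep r :: 'k qrep) ((i + n) mod r) = 1"
    using assms by (simp add: uniserial_rep_def)
  then show ?case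
    using Suc by (auto simp: mmul_Suc_0 uniserial_rep_def fun_eq_iff)
qed

lemma tube_obj_uniserial_rep: "r \<ge> 1 \<Longrightarrow> tube_obj r (uniserial_rep r :: 'k::field qrep)"
  unfolding tube_obj_def
  by (auto intro!: exI[of _ r] simp: is_rep_uniserial_rep pth_uniserial_rep fun_eq_iff)

lemma nonzero_rep_uniserial_rep: "r \<ge> 1 \<Longrightarrow> nonzero_rep r (uniserial_rep r :: 'k::field qrep)"
  by (auto simp: nonzero_rep_def uniserial_rep_def intro: exI[of _ 0])

lemma homs_uniserial_rep:
  assumes r: "r \<ge> 1"
  shows "homs r (uniserial_rep r) (uniserial_rep r :: 'k::field qrep)
    = range (\<lambda>c. fsc c (\<lambda>i a b. if i < r \<and> a = 0 \<and> b = 0 then 1 else 0))"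
    (is "?H = range (\<lambda>c. fsc c ?e)")
proof
  show "?H \<subseteq> range (\<lambda>c. fsc c ?e)"
  proof
    fix g assume g: "g \<in> ?H"
    then have outside: "g i a b = 0" if "\<not> (i < r \<and> a = 0 \<and> b = 0)" for i a b
      using that g by (cases "i < r") (auto simp: homs_def vmaps_def supp_in_def uniserial_rep_def)
    have step: "g (Suc i) 0 0 = g i 0 0" if "Suc i < r" for i
    proof -
      have "delta r (uniserial_rep r) (uniserial_rep r) g i 0 0 = 0"
        using g by (simp add: homs_def)
      then show ?thesis
        using that by (simp add: delta_def mmul_Suc_0 uniserial_rep_def nxt_def)
    qed
    have equal_at_vertices: "i < r \<Longrightarrow> g i 0 0 = g 0 0 0" for i
      by (induction i) (use step in auto)
    have "g i a b = fsc (g 0 0 0) ?e i a b" for i a b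
      using outside[of i a b] equal_at_vertices[of i] by (cases "i < r \<and> a = 0 \<and> b = 0") (auto simp: fsc_def)
    then have "g = fsc (g 0 0 0) ?e" by blast
    then show "g \<in> range (\<lambda>c. fsc c ?e)" by blast
  qed
next
  show "range (\<lambda>c. fsc c ?e) \<subseteq> ?H"
  proof clarify
    fix c :: 'k
    have "fsc c ?e \<in> vmaps r (uniserial_rep r) (uniserial_rep r :: 'k qrep)"
      by (auto simp: vmaps_def supp_in_def uniserial_rep_def fsc_def fun_eq_iff)
    moreover have "delta r (uniserial_rep r) (uniserial_rep r :: 'k qrep) (fsc c ?e) = (\<lambda>_ _ _. 0)"
      using nxt_less[OF r] by (auto simp: delta_def mmul_Suc_0 uniserial_rep_def fsc_def fun_eq_iff nxt_def)
    ultimately show "fsc c ?e \<in> ?H" by (simp add: homs_def)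
  qed
qed

lemma dim_hom_uniserial_rep:
  assumes "r \<ge> 1"
  shows "dim_hom r (uniserial_rep r) (uniserial_rep r :: 'k::field qrep) = 1"
proof -
  let ?e = "\<lambda>i a b. if i < r \<and> a = 0 \<and> b = 0 then 1 else (0::'k)"
  have "?e \<noteq> 0"
    using assms by (auto simp: fun_eq_iff intro!: exI[of _ 0])
  then have "fam.dim (fam.span {?e}) = 1"
    using fam.dim_span_eq_card_independent[of "{?e}"] by simp
  then show ?thesis
    by (simp add: dim_hom_def dimk_def homs_uniserial_rep[OF assms] fam.span_singleton)
qed

lemma dim_ext_uniserial_rep:
  assumes r: "r \<ge> 1"
  shows "dim_ext r (uniserial_rep r) (uniserial_rep r :: 'k::field qrep) = 1"
proof -
  have rep: "is_rep r (uniserial_rep r :: 'k qrep)"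
    by (rule is_rep_uniserial_rep[OF r])
  have "euler_form r (\<lambda>i. int (fst (uniserial_rep r :: 'k qrep) i)) (\<lambda>i. int (fst (uniserial_rep r :: 'k qrep) i)) = 0"
    using nxt_less[OF r] by (simp add: euler_form_def uniserial_rep_def)
  then have "dim_ext r (uniserial_rep r) (uniserial_rep r :: 'k qrep)
      = dim_hom r (uniserial_rep r) (uniserial_rep r :: 'k qrep)"
    using of_nat_dim_hom_minus_dim_ext[OF r rep rep, where 'a = int] by linarith
  then show ?thesis
    using dim_hom_uniserial_rep[OF r] by simp
qed

lemma brick_set_uniserial_rep: "r \<ge> 1 \<Longrightarrow> brick_set r [uniserial_rep r :: 'k::field qrep]"
  by (simp add: brick_set_def is_brick_def tube_obj_uniserial_rep nonzero_rep_uniserial_rep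
      dim_hom_uniserial_rep)

theorem corollary5p2:
  fixes r :: nat
  assumes "r \<ge> 1"
  shows "fpdim_tube TYPE('k::alg_closed_field) r = 1"
proof (rule antisym)
  show "fpdim_tube TYPE('k) r \<le> 1"
    unfolding fpdim_tube_def
    by (rule SUP_least) (use spectral_radius_adj_mat_le_1[OF assms] in auto)
  have "spectral_radius (adj_mat r [uniserial_rep r :: 'k qrep]) = 1"
    by (simp add: spectral_radius_adj_mat_singleton dim_ext_uniserial_rep[OF assms])
  then show "1 \<le> fpdim_tube TYPE('k) r"
    unfolding fpdim_tube_def using brick_set_uniserial_rep[OF assms, where 'k = 'k]
    by (auto intro!: SUP_upper2[of "[uniserial_rep r]"])
qed

end
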